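(* Let $\mu$ be a valuated matroid on $[n]$. (i) Let $f=(f_1,f_2):[n]\cup\{o\}\to([n]\cup\{o\})\times\mathbb{T}$ be a map with $f_1(i)=i$ for all $i$, and assume that for every $i\in[n]$ there is $k\in K$ with $f_2(i)=\mathrm{val}(k)$. Then for the associated weakly monomial matrix $A_f$, $\overline{\operatorname{trop}}(f^{-1}(\mu))=\mathrm{val}(A_f)\odot\overline{\operatorname{trop}}(\mu)$. (ii) Conversely, if $A_f\in K^{n\times n}$ is a full-rank diagonal matrix, its associated map $f$ satisfies $\overline{\operatorname{trop}}(f^{-1}(\mu))=\mathrm{val}(A_f)\odot\overline{\operatorname{trop}}(\mu)$.
   Context: $K$ is a field with non-Archimedean valuation $\mathrm{val}:K\to\mathbb{T}=\mathbb{R}\cup\{\infty\}$; $(\mathrm{val}(M)\odot v)_i=\min_j(\mathrm{val}(M_{ij})+v_j)$, applied pointwise to sets. Valuated matroid of rank $r$ on finite $E$: $\nu:\binom{E}{r}\to\mathbb{T}$, not identically $\infty$, with exchange property (for all $I,J$, $i\in I\setminus J$ there is $j\in J\setminus I$ with $\nu(I)+\nu(J)\ge\nu((I\setminus i)\cup j)+\nu((J\setminus j)\cup i)$), up to additive constants; $\overline{\operatorname{trop}}(\nu)\subseteq\mathbb{P}(\mathbb{T}^E)$ is the set of $x$ with $\min_e(C_\nu(I)_e+x_e)$ attained at least twice for all $I\in\binom{E}{r+1}$ with $C_\nu(I)\ne(\infty,\dots)$, where $C_\nu(I)_e=\nu(I\setminus e)$ for $e\in I$, $\infty$ else. Pointed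 matroid $\mu_o$: $\mu$ extended to $[n]\cup\{o\}$ with $o$ a loop. With $S=f_1([n]\cup\{o\})$, $f^{-1}(\mu)(B)=\mu_o|_S(f_1(B))+\sum_{i\in B}f_2(i)$ where $\mu_o|_S$ is the restriction of $\mu_o$ to $S$ and $|B|$ equals its rank; $\overline{\operatorname{trop}}(f^{-1}(\mu))$ denotes the projection to the coordinates in $[n]$ of its tropical linear space. Associated matrix of $f$: $(A_f)_{ij}=k_i$ if $f_1(i)=j\in[n]$ with $\mathrm{val}(k_i)=f_2(i)$, and $0$ otherwise. Associated map of a weakly monomial matrix $M$ (at most one nonzero entry per row): $f(o)=(o,\infty)$; $f(i)=(o,\infty)$ if row $i$ is zero; $f(i)=(j,\mathrm{val}(M_{ij}))$ if $M_{ij}\ne0$. *)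

theory Defs
  imports "HOL-Library.Extended_Real"
begin

text \<open>Tropical numbers T = R \<union> {\<infinity>} are modelled by ereal values different from -\<infinity>.
  The ground set [n] is {1..n}; the extra point o is the natural number 0,
  so [n] \<union> {o} = {0..n}.  Vectors in T^E are functions nat \<Rightarrow> ereal that
  are \<infinity> outside E.  Tropical linear spaces are taken affinely (as cones in T^E,
  closed under adding real constants, containing the all-\<infinity> vector) instead of
  in the projective space.\<close>

definition nonarch_valuation :: "('k::field \<Rightarrow> ereal) \<Rightarrow> bool" where
  "nonarch_valuation val \<longleftrightarrow>
     val 0 = \<infinity> \<and>
     (\<forall>x. x \<noteq> 0 \<longrightarrow> (\<exists>c::real. val x = ereal c)) \<and>
     (\<forall>x y. val (x * y) = val x + val y) \<and>
     (\<forall>x y. min (val x) (val y) \<le> val (x + y))"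

definition valuated_matroid :: "nat set \<Rightarrow> nat \<Rightarrow> (nat set \<Rightarrow> ereal) \<Rightarrow> bool" where
  "valuated_matroid E r \<nu> \<longleftrightarrow>
     finite E \<and>
     (\<forall>B. B \<subseteq> E \<and> card B = r \<longrightarrow> \<nu> B \<noteq> -\<infinity>) \<and>
     (\<exists>B. B \<subseteq> E \<and> card B = r \<and> \<nu> B \<noteq> \<infinity>) \<and>
     (\<forall>I J. I \<subseteq> E \<and> card I = r \<and> J \<subseteq> E \<and> card J = r \<longrightarrow>
        (\<forall>i\<in>I - J. \<exists>j\<in>J - I.
           \<nu> (insert j (I - {i})) + \<nu> (insert i (J - {j})) \<le> \<nu> I + \<nu> J))"

definition min_twice :: "nat set \<Rightarrow> (nat \<Rightarrow> ereal) \<Rightarrow> bool" where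
  "min_twice I g \<longleftrightarrow> (\<forall>e\<in>I. g e = \<infinity>) \<or>
     (\<exists>e1\<in>I. \<exists>e2\<in>I. e1 \<noteq> e2 \<and> g e1 = g e2 \<and> (\<forall>e\<in>I. g e1 \<le> g e))"

text \<open>Tropical linear space of \<nu> (rank r on E), affine version.
  C_\<nu>(I)_e = \<nu>(I - e) for e \<in> I and \<infinity> otherwise; entries outside I do not
  affect the minimum.\<close>
definition trop :: "nat set \<Rightarrow> nat \<Rightarrow> (nat set \<Rightarrow> ereal) \<Rightarrow> (nat \<Rightarrow> ereal) set" where
  "trop E r \<nu> = {x. (\<forall>e. x e \<noteq> -\<infinity>) \<and> (\<forall>e. e \<notin> E \<longrightarrow> x e = \<infinity>) \<and>
      (\<forall>I. I \<subseteq> E \<and> card I = Suc r \<and> (\<exists>e\<in>I. \<nu> (I - {e}) \<noteq> \<infinity>) \<longrightarrow>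
           min_twice I (\<lambda>e. \<nu> (I - {e}) + x e))}"

definition pointed :: "(nat set \<Rightarrow> ereal) \<Rightarrow> nat set \<Rightarrow> ereal" where
  "pointed \<mu> B = (if 0 \<in> B then \<infinity> else \<mu> B)"

text \<open>Pullback f^{-1}(\<mu>)(B) = \<mu>_o|_S(f_1(B)) + \<Sum>_{i\<in>B} f_2(i).  This is the
  formula for the case S = f_1({0..n}) = {0..n} (so \<mu>_o|_S = \<mu>_o, of rank r),
  which is the only case used below (f_1 = id); f_1(B) must then be an r-set.\<close>
definition pullback :: "nat \<Rightarrow> (nat set \<Rightarrow> ereal) \<Rightarrow> (nat \<Rightarrow> nat \<times> ereal) \<Rightarrow> nat set \<Rightarrow> ereal" where
  "pullback n \<mu> f B =
     (if inj_on (fst \<circ> f) B \<and> (fst \<circ> f) ` B \<subseteq> {0..n} then pointed \<mu> ((fst \<circ> f) ` B) else \<infinity>)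
     + (\<Sum>i\<in>B. snd (f i))"

definition proj_n :: "nat \<Rightarrow> (nat \<Rightarrow> ereal) \<Rightarrow> (nat \<Rightarrow> ereal)" where
  "proj_n n x = (\<lambda>e. if e \<in> {1..n} then x e else \<infinity>)"

definition trop_act :: "nat \<Rightarrow> ('k \<Rightarrow> ereal) \<Rightarrow> (nat \<Rightarrow> nat \<Rightarrow> 'k) \<Rightarrow> (nat \<Rightarrow> ereal) \<Rightarrow> (nat \<Rightarrow> ereal)" where
  "trop_act n val M v = (\<lambda>i. if i \<in> {1..n} then (INF j\<in>{1..n}. val (M i j) + v j) else \<infinity>)"

definition associated_matrix :: "nat \<Rightarrow> ('k::zero \<Rightarrow> ereal) \<Rightarrow> (nat \<Rightarrow> nat \<times> ereal) \<Rightarrow> (nat \<Rightarrow> nat \<Rightarrow> 'k) \<Rightarrow> bool" where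
  "associated_matrix n val f A \<longleftrightarrow>
     (\<forall>i\<in>{1..n}. \<forall>j\<in>{1..n}. j \<noteq> fst (f i) \<longrightarrow> A i j = 0) \<and>
     (\<forall>i\<in>{1..n}. fst (f i) \<in> {1..n} \<longrightarrow> val (A i (fst (f i))) = snd (f i))"

definition weakly_monomial :: "nat \<Rightarrow> (nat \<Rightarrow> nat \<Rightarrow> 'k::zero) \<Rightarrow> bool" where
  "weakly_monomial n M \<longleftrightarrow>
     (\<forall>i\<in>{1..n}. \<forall>j\<in>{1..n}. \<forall>j'\<in>{1..n}. M i j \<noteq> 0 \<and> M i j' \<noteq> 0 \<longrightarrow> j = j')"

definition associated_map :: "nat \<Rightarrow> ('k::zero \<Rightarrow> ereal) \<Rightarrow> (nat \<Rightarrow> nat \<Rightarrow> 'k) \<Rightarrow> nat \<Rightarrow> nat \<times> ereal" where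
  "associated_map n val M i =
     (if i \<in> {1..n} \<and> (\<exists>j\<in>{1..n}. M i j \<noteq> 0)
      then (let j = (THE j. j \<in> {1..n} \<and> M i j \<noteq> 0) in (j, val (M i j)))
      else (0, \<infinity>))"

definition full_rank_diagonal :: "nat \<Rightarrow> (nat \<Rightarrow> nat \<Rightarrow> 'k::zero) \<Rightarrow> bool" where
  "full_rank_diagonal n M \<longleftrightarrow>
     (\<forall>i\<in>{1..n}. \<forall>j\<in>{1..n}. i \<noteq> j \<longrightarrow> M i j = 0) \<and> (\<forall>i\<in>{1..n}. M i i \<noteq> 0)"

end

theory Submission
  imports Defs
begin

text \<open>With f_1 the identity, the pullback is \<nu>(B) = \<mu>(B) + \<Sum>_{i\<in>B} w_i on sets avoiding the
  loop o, where w_i = f_2(i) = val(A_ii), and val(A_f) \<odot> v is the coordinatewise shift w + v.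
  The elements with w_i = \<infinity> are loops of \<nu>, so they can be deleted; on the remaining set E'
  the weights are finite and only shift the tropical linear space, which is therefore
  w + trop(\<mu>|E').  It remains to see that trop(\<mu>|E') is the coordinate projection of trop(\<mu>)
  when E' contains a basis.  Here one uses that x lies in the tropical linear space iff every
  e with x_e finite lies in an optimal basis, one minimising \<mu>(B) - \<Sum>_{e\<in>B} x_e.  To extend x
  by one new element d, either some optimal basis of the larger matroid must pass through d,
  and this dictates the finite value x_d, or none does and x_d = \<infinity> works.\<close>

lemma ex_minimizer:
  fixes f :: "'a \<Rightarrow> 'b::linorder"
  assumes "finite S" "S \<noteq> {}"
  shows "\<exists>s\<in>S. \<forall>s'\<in>S. f s \<le> f s'"
  using arg_min_if_finite(1)[OF assms] arg_min_least[OF assms] by blast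

lemma card_swap: "finite B \<Longrightarrow> e \<in> B \<Longrightarrow> j \<notin> B \<Longrightarrow> card (insert j (B - {e})) = card B"
proof -
  assume "finite B" "e \<in> B" "j \<notin> B"
  then have "card (insert j (B - {e})) = Suc (card (B - {e}))" by simp
  also have "\<dots> = card B" using \<open>finite B\<close> \<open>e \<in> B\<close> by (rule card_Suc_Diff1)
  finally show ?thesis .
qed

lemma ereal_add_le_iff_real:
  fixes a b c d :: ereal
  assumes "\<bar>a\<bar> \<noteq> \<infinity>" "\<bar>b\<bar> \<noteq> \<infinity>" "\<bar>c\<bar> \<noteq> \<infinity>" "\<bar>d\<bar> \<noteq> \<infinity>"
  shows "a + b \<le> c + d \<longleftrightarrow> real_of_ereal a + real_of_ereal b \<le> real_of_ereal c + real_of_ereal d"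
  using assms by (cases a; cases b; cases c; cases d) auto

lemma sum_remove_finite:
  assumes "finite I" "e \<in> I" "\<forall>i\<in>I. \<bar>w i\<bar> \<noteq> \<infinity>"
  shows "sum w (I - {e}) = ereal ((\<Sum>i\<in>I. real_of_ereal (w i)) - real_of_ereal (w e))"
proof -
  have "sum w (I - {e}) = (\<Sum>i\<in>I - {e}. ereal (real_of_ereal (w i)))"
    using assms(3) by (intro sum.cong) auto
  then show ?thesis using assms(1,2) by (simp add: sum_diff1)
qed

lemma min_twice_cong: "(\<And>e. e \<in> I \<Longrightarrow> g e = h e) \<Longrightarrow> min_twice I g = min_twice I h"
  unfolding min_twice_def by auto

lemma min_twiceI:
  assumes "e0 \<in> I" "\<forall>e\<in>I. g e0 \<le> g e" "e1 \<in> I" "e1 \<noteq> e0" "g e1 \<le> g e0"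
  shows "min_twice I g"
  unfolding min_twice_def using assms by (metis order_antisym)

lemma min_twice_other_le:
  assumes "min_twice I g" "e0 \<in> I" "g e0 \<noteq> \<infinity>"
  shows "\<exists>e\<in>I. e \<noteq> e0 \<and> g e \<le> g e0"
proof -
  obtain e1 e2 where "e1 \<in> I" "e2 \<in> I" "e1 \<noteq> e2" "g e1 = g e2" "\<forall>e\<in>I. g e1 \<le> g e"
    using assms unfolding min_twice_def by blast
  then show ?thesis using assms(2) by (cases "e1 = e0") auto
qed

lemma min_twice_add_const:
  assumes "min_twice I g"
  shows "min_twice I (\<lambda>e. g e + ereal c)"
proof (cases "\<forall>e\<in>I. g e = \<infinity>")
  case False
  then obtain e1 e2 where "e1 \<in> I" "e2 \<in> I" "e1 \<noteq> e2" "g e1 = g e2" "\<forall>e\<in>I. g e1 \<le> g e"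
    using assms unfolding min_twice_def by blast
  then show ?thesis unfolding min_twice_def by (metis add_right_mono)
qed (simp add: min_twice_def)

lemma min_twice_add_const_iff: "min_twice I (\<lambda>e. g e + ereal c) \<longleftrightarrow> min_twice I g"
proof
  assume "min_twice I (\<lambda>e. g e + ereal c)"
  then have "min_twice I (\<lambda>e. g e + ereal c + ereal (- c))" by (rule min_twice_add_const)
  moreover have "g e + ereal c + ereal (- c) = g e" for e by (cases "g e") auto
  ultimately show "min_twice I g" by simp
qed (rule min_twice_add_const)

lemma trop_min_twice:
  assumes "x \<in> trop E r \<mu>" "I \<subseteq> E" "card I = Suc r" "e \<in> I" "\<mu> (I - {e}) \<noteq> \<infinity>"
  shows "min_twice I (\<lambda>e. \<mu> (I - {e}) + x e)"
  using assms unfolding trop_def by blast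

lemma trop_cong:
  assumes "\<And>B. B \<subseteq> E \<Longrightarrow> \<nu> B = \<nu>' B"
  shows "trop E r \<nu> = trop E r \<nu>'"
proof -
  have "\<And>I e. I \<subseteq> E \<Longrightarrow> \<nu> (I - {e}) = \<nu>' (I - {e})" using assms by blast
  then show ?thesis unfolding trop_def by (simp cong: conj_cong)
qed

section \<open>Loops and finite weights\<close>

definition inf_outside :: "nat set \<Rightarrow> (nat \<Rightarrow> ereal) \<Rightarrow> nat \<Rightarrow> ereal" where
  "inf_outside S x = (\<lambda>e. if e \<in> S then x e else \<infinity>)"

lemma trop_loop_coordinate:
  assumes x: "x \<in> trop E r \<nu>" and fin: "finite E" and l: "l \<in> E"
    and loop: "\<And>B. B \<subseteq> E \<Longrightarrow> l \<in> B \<Longrightarrow> \<nu> B = \<infinity>"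
    and B0: "B0 \<subseteq> E" "l \<notin> B0" "card B0 = r" "\<nu> B0 \<noteq> \<infinity>"
  shows "x l = \<infinity>"
proof (rule ccontr)
  assume x_l: "x l \<noteq> \<infinity>"
  let ?I = "insert l B0"
  have "finite B0" using B0(1) fin finite_subset by auto
  then have I: "?I \<subseteq> E" "card ?I = Suc r" "?I - {l} = B0" using B0 l by auto
  have "\<nu> (?I - {l}) \<noteq> \<infinity>" using I(3) B0(4) by simp
  then have "min_twice ?I (\<lambda>e. \<nu> (?I - {e}) + x e)" by (rule trop_min_twice[OF x I(1,2) insertI1])
  moreover have fin_l: "\<nu> (?I - {l}) + x l \<noteq> \<infinity>" using I(3) B0(4) x_l by simp
  ultimately obtain e where e: "e \<in> ?I" "e \<noteq> l" "\<nu> (?I - {e}) + x e \<le> \<nu> (?I - {l}) + x l"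
    using min_twice_other_le[of ?I _ l] by blast
  have "\<nu> (?I - {e}) = \<infinity>" using loop[of "?I - {e}"] I(1) e(2) by auto
  then show False using e(3) fin_l by simp
qed

lemma trop_remove_loops:
  assumes fin: "finite E" and L: "L \<subseteq> E"
    and loops: "\<And>B. B \<subseteq> E \<Longrightarrow> B \<inter> L \<noteq> {} \<Longrightarrow> \<nu> B = \<infinity>"
    and B0: "B0 \<subseteq> E - L" "card B0 = r" "\<nu> B0 \<noteq> \<infinity>"
  shows "trop E r \<nu> = trop (E - L) r \<nu>"
proof
  show "trop E r \<nu> \<subseteq> trop (E - L) r \<nu>"
  proof
    fix x assume x: "x \<in> trop E r \<nu>"
    have "x l = \<infinity>" if "l \<in> L" for l
      using trop_loop_coordinate[OF x fin, of l B0] that L loops B0 by blast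
    then show "x \<in> trop (E - L) r \<nu>" using x unfolding trop_def by auto
  qed
  show "trop (E - L) r \<nu> \<subseteq> trop E r \<nu>"
  proof
    fix x assume x: "x \<in> trop (E - L) r \<nu>"
    have "min_twice I (\<lambda>e. \<nu> (I - {e}) + x e)"
      if I: "I \<subseteq> E" "card I = Suc r" "\<exists>e\<in>I. \<nu> (I - {e}) \<noteq> \<infinity>" for I
    proof (cases "I \<inter> L = {}")
      case True
      then have "I \<subseteq> E - L" using I(1) by blast
      then show ?thesis using trop_min_twice[OF x _ I(2)] I(3) by blast
    next
      case False
      then obtain l where l: "l \<in> I" "l \<in> L" by blast
      have "\<nu> (I - {e}) + x e = \<infinity>" if "e \<in> I" for e
      proof (cases "e = l")
        case True
        then show ?thesis using x l(2) unfolding trop_def by simp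
      next
        case False
        then show ?thesis using loops[of "I - {e}"] I(1) l by auto
      qed
      then show ?thesis unfolding min_twice_def by simp
    qed
    then show "x \<in> trop E r \<nu>" using x unfolding trop_def by auto
  qed
qed

lemma trop_add_weights_iff:
  assumes w: "\<forall>e\<in>E. \<bar>w e\<bar> \<noteq> \<infinity>" and x_v: "\<forall>e\<in>E. x e = w e + v e"
    and out: "\<forall>e. e \<notin> E \<longrightarrow> x e = \<infinity> \<and> v e = \<infinity>"
  shows "x \<in> trop E r (\<lambda>B. \<mu> B + sum w B) \<longleftrightarrow> v \<in> trop E r \<mu>"
proof -
  have circuit: "(I \<subseteq> E \<and> card I = Suc r \<and> (\<exists>e\<in>I. \<mu> (I - {e}) + sum w (I - {e}) \<noteq> \<infinity>) \<longrightarrow>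
      min_twice I (\<lambda>e. \<mu> (I - {e}) + sum w (I - {e}) + x e))
    \<longleftrightarrow> (I \<subseteq> E \<and> card I = Suc r \<and> (\<exists>e\<in>I. \<mu> (I - {e}) \<noteq> \<infinity>) \<longrightarrow>
      min_twice I (\<lambda>e. \<mu> (I - {e}) + v e))" for I
  proof (cases "I \<subseteq> E \<and> card I = Suc r")
    case True
    define W where "W = (\<Sum>i\<in>I. real_of_ereal (w i))"
    have "finite I" using True card.infinite by force
    then have sum_I: "sum w (I - {e}) = ereal (W - real_of_ereal (w e))" if "e \<in> I" for e
      using sum_remove_finite[of I e w] that w True unfolding W_def by (meson subsetD)
    have "\<mu> (I - {e}) + sum w (I - {e}) + x e = \<mu> (I - {e}) + v e + ereal W" if "e \<in> I" for e
    proof -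
      have "e \<in> E" using that True by auto
      then obtain c where c: "w e = ereal c" "x e = ereal c + v e" using w x_v by (cases "w e") auto
      show ?thesis unfolding sum_I[OF that] c by (cases "\<mu> (I - {e})"; cases "v e") auto
    qed
    then have "min_twice I (\<lambda>e. \<mu> (I - {e}) + sum w (I - {e}) + x e)
        \<longleftrightarrow> min_twice I (\<lambda>e. \<mu> (I - {e}) + v e + ereal W)"
      by (intro min_twice_cong) auto
    also have "\<dots> \<longleftrightarrow> min_twice I (\<lambda>e. \<mu> (I - {e}) + v e)" by (rule min_twice_add_const_iff)
    moreover have "(\<exists>e\<in>I. \<mu> (I - {e}) + sum w (I - {e}) \<noteq> \<infinity>) \<longleftrightarrow> (\<exists>e\<in>I. \<mu> (I - {e}) \<noteq> \<infinity>)"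
      using sum_I by simp
    ultimately show ?thesis by (simp only:)
  qed auto
  have no_minf: "x e \<noteq> -\<infinity> \<longleftrightarrow> v e \<noteq> -\<infinity>" for e
    using w x_v out by (cases "e \<in> E"; cases "w e"; cases "v e") auto
  show ?thesis unfolding trop_def mem_Collect_eq circuit no_minf using out by simp
qed

lemma trop_add_weights:
  assumes w: "\<forall>e\<in>E. \<bar>w e\<bar> \<noteq> \<infinity>"
  shows "trop E r (\<lambda>B. \<mu> B + sum w B) = (\<lambda>v. inf_outside E (\<lambda>e. w e + v e)) ` trop E r \<mu>"
proof
  show "trop E r (\<lambda>B. \<mu> B + sum w B) \<subseteq> (\<lambda>v. inf_outside E (\<lambda>e. w e + v e)) ` trop E r \<mu>"
  proof
    fix x assume x: "x \<in> trop E r (\<lambda>B. \<mu> B + sum w B)"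
    define v where "v = inf_outside E (\<lambda>e. x e - w e)"
    have x_v: "\<forall>e\<in>E. x e = w e + v e"
    proof
      fix e assume "e \<in> E"
      then show "x e = w e + v e" using w unfolding v_def inf_outside_def by (cases "x e"; cases "w e") auto
    qed
    have out: "\<forall>e. e \<notin> E \<longrightarrow> x e = \<infinity> \<and> v e = \<infinity>" using x unfolding trop_def v_def inf_outside_def by simp
    have "v \<in> trop E r \<mu>" using x trop_add_weights_iff[OF w x_v out] by simp
    moreover have "x = inf_outside E (\<lambda>e. w e + v e)" using x_v out unfolding inf_outside_def by auto
    ultimately show "x \<in> (\<lambda>v. inf_outside E (\<lambda>e. w e + v e)) ` trop E r \<mu>" by blast
  qed
  show "(\<lambda>v. inf_outside E (\<lambda>e. w e + v e)) ` trop E r \<mu> \<subseteq> trop E r (\<lambda>B. \<mu> B + sum w B)"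
  proof
    fix x assume "x \<in> (\<lambda>v. inf_outside E (\<lambda>e. w e + v e)) ` trop E r \<mu>"
    then obtain v where v: "v \<in> trop E r \<mu>" and x: "x = inf_outside E (\<lambda>e. w e + v e)" by blast
    have "\<forall>e. e \<notin> E \<longrightarrow> x e = \<infinity> \<and> v e = \<infinity>" using v unfolding x trop_def inf_outside_def by simp
    moreover have "\<forall>e\<in>E. x e = w e + v e" unfolding x inf_outside_def by simp
    ultimately show "x \<in> trop E r (\<lambda>B. \<mu> B + sum w B)"
      using trop_add_weights_iff[OF w] v by blast
  qed
qed

section \<open>Bases of finite valuation\<close>

definition finite_bases :: "nat set \<Rightarrow> nat \<Rightarrow> (nat set \<Rightarrow> ereal) \<Rightarrow> nat set set" where
  "finite_bases E r \<mu> = {B. B \<subseteq> E \<and> card B = r \<and> \<mu> B \<noteq> \<infinity>}"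

lemma finite_bases_finite: "finite E \<Longrightarrow> finite (finite_bases E r \<mu>)"
  by (rule finite_subset[of _ "Pow E"]) (auto simp: finite_bases_def)

lemma finite_bases_mono: "E' \<subseteq> E \<Longrightarrow> finite_bases E' r \<mu> \<subseteq> finite_bases E r \<mu>"
  by (auto simp: finite_bases_def)

lemma valuated_matroid_finite: "valuated_matroid E r \<mu> \<Longrightarrow> finite E"
  unfolding valuated_matroid_def by simp

lemma valuated_matroid_finite_bases_nonempty: "valuated_matroid E r \<mu> \<Longrightarrow> finite_bases E r \<mu> \<noteq> {}"
  unfolding valuated_matroid_def finite_bases_def by blast

lemma valuated_matroid_not_minf:
  "valuated_matroid E r \<mu> \<Longrightarrow> B \<subseteq> E \<Longrightarrow> card B = r \<Longrightarrow> \<mu> B \<noteq> -\<infinity>"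
  unfolding valuated_matroid_def by blast

lemma valuated_matroid_exchange:
  assumes "valuated_matroid E r \<mu>" "I \<subseteq> E" "card I = r" "J \<subseteq> E" "card J = r" "i \<in> I - J"
  shows "\<exists>j\<in>J - I. \<mu> (insert j (I - {i})) + \<mu> (insert i (J - {j})) \<le> \<mu> I + \<mu> J"
proof -
  have "\<forall>I J. I \<subseteq> E \<and> card I = r \<and> J \<subseteq> E \<and> card J = r \<longrightarrow>
      (\<forall>i\<in>I - J. \<exists>j\<in>J - I. \<mu> (insert j (I - {i})) + \<mu> (insert i (J - {j})) \<le> \<mu> I + \<mu> J)"
    using assms(1) unfolding valuated_matroid_def by blast
  then show ?thesis using assms(2-6) by blast
qed

lemma finite_bases_finite_member:
  "valuated_matroid E r \<mu> \<Longrightarrow> B \<in> finite_bases E r \<mu> \<Longrightarrow> finite B"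
  using valuated_matroid_finite finite_subset unfolding finite_bases_def by blast

lemma finite_bases_real:
  assumes "valuated_matroid E r \<mu>" "B \<in> finite_bases E r \<mu>"
  shows "\<bar>\<mu> B\<bar> \<noteq> \<infinity>"
  using valuated_matroid_not_minf[OF assms(1)] assms(2) unfolding finite_bases_def by auto

lemma valuated_matroid_subset:
  assumes vm: "valuated_matroid E r \<mu>" and E': "E' \<subseteq> E" "finite_bases E' r \<mu> \<noteq> {}"
  shows "valuated_matroid E' r \<mu>"
  unfolding valuated_matroid_def
proof (intro conjI allI impI ballI)
  show "finite E'" using E'(1) valuated_matroid_finite[OF vm] by (rule finite_subset)
  show "\<exists>B. B \<subseteq> E' \<and> card B = r \<and> \<mu> B \<noteq> \<infinity>" using E'(2) unfolding finite_bases_def by blast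
  show "\<mu> B \<noteq> -\<infinity>" if "B \<subseteq> E' \<and> card B = r" for B
    using valuated_matroid_not_minf[OF vm] that E'(1) by blast
  show "\<exists>j\<in>J - I. \<mu> (insert j (I - {i})) + \<mu> (insert i (J - {j})) \<le> \<mu> I + \<mu> J"
    if "I \<subseteq> E' \<and> card I = r \<and> J \<subseteq> E' \<and> card J = r" "i \<in> I - J" for I J i
    using valuated_matroid_exchange[OF vm, of I J i] that E'(1) by blast
qed

lemma exchange_finite_bases:
  assumes vm: "valuated_matroid E r \<mu>" and B: "B \<in> finite_bases E r \<mu>"
    and B': "B' \<in> finite_bases E r \<mu>" and e: "e \<in> B - B'"
  shows "\<exists>j\<in>B' - B. insert j (B - {e}) \<in> finite_bases E r \<mu> \<and> insert e (B' - {j}) \<in> finite_bases E r \<mu> \<and>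
     real_of_ereal (\<mu> (insert j (B - {e}))) + real_of_ereal (\<mu> (insert e (B' - {j})))
       \<le> real_of_ereal (\<mu> B) + real_of_ereal (\<mu> B')"
proof -
  have fin: "\<bar>\<mu> B\<bar> \<noteq> \<infinity>" "\<bar>\<mu> B'\<bar> \<noteq> \<infinity>" using finite_bases_real[OF vm] B B' by auto
  obtain j where j: "j \<in> B' - B"
    and ex: "\<mu> (insert j (B - {e})) + \<mu> (insert e (B' - {j})) \<le> \<mu> B + \<mu> B'"
    using valuated_matroid_exchange[OF vm _ _ _ _ e] B B' unfolding finite_bases_def by blast
  let ?B1 = "insert j (B - {e})" and ?B2 = "insert e (B' - {j})"
  have finB: "finite B" "finite B'" using finite_bases_finite_member[OF vm] B B' by auto
  have sub: "?B1 \<subseteq> E" "?B2 \<subseteq> E" "card ?B1 = r" "card ?B2 = r"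
    using B B' e j card_swap[OF finB(1), of e j] card_swap[OF finB(2), of j e]
    unfolding finite_bases_def by auto
  have "\<mu> ?B1 \<noteq> -\<infinity>" "\<mu> ?B2 \<noteq> -\<infinity>" using valuated_matroid_not_minf[OF vm] sub by auto
  moreover have "\<mu> ?B1 + \<mu> ?B2 \<noteq> \<infinity>" using ex fin by (cases "\<mu> B"; cases "\<mu> B'") auto
  ultimately have "\<bar>\<mu> ?B1\<bar> \<noteq> \<infinity>" "\<bar>\<mu> ?B2\<bar> \<noteq> \<infinity>" by auto
  then show ?thesis
    using j sub ex fin ereal_add_le_iff_real unfolding finite_bases_def by auto
qed

section \<open>Optimal bases\<close>

definition inf_count :: "(nat \<Rightarrow> ereal) \<Rightarrow> nat set \<Rightarrow> nat" where
  "inf_count x B = card {e\<in>B. x e = \<infinity>}"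

definition basis_cost :: "(nat set \<Rightarrow> ereal) \<Rightarrow> (nat \<Rightarrow> ereal) \<Rightarrow> nat set \<Rightarrow> real" where
  "basis_cost \<mu> x B = real_of_ereal (\<mu> B) - (\<Sum>e\<in>{e\<in>B. x e \<noteq> \<infinity>}. real_of_ereal (x e))"

text \<open>An optimal basis for x minimises \<mu>(B) - \<Sum>_{e\<in>B} x_e, an infinite x_e counting as an
  infinite reward: it first maximises the number of infinite coordinates in B and then minimises
  the finite part, the basis cost.\<close>

definition optimal_basis ::
    "nat set \<Rightarrow> nat \<Rightarrow> (nat set \<Rightarrow> ereal) \<Rightarrow> (nat \<Rightarrow> ereal) \<Rightarrow> nat set \<Rightarrow> bool" where
  "optimal_basis E r \<mu> x B \<longleftrightarrow> B \<in> finite_bases E r \<mu> \<and>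
     (\<forall>B'\<in>finite_bases E r \<mu>. inf_count x B' \<le> inf_count x B \<and>
        (inf_count x B' = inf_count x B \<longrightarrow> basis_cost \<mu> x B \<le> basis_cost \<mu> x B'))"

lemma optimal_basis_exists:
  assumes "finite E" "finite_bases E r \<mu> \<noteq> {}"
  shows "\<exists>B. optimal_basis E r \<mu> x B"
proof -
  let ?F = "finite_bases E r \<mu>"
  have fin: "finite ?F" using assms(1) by (rule finite_bases_finite)
  have "Max (inf_count x ` ?F) \<in> inf_count x ` ?F" using fin assms(2) by simp
  then obtain Bk where Bk: "Bk \<in> ?F" "inf_count x Bk = Max (inf_count x ` ?F)" by auto
  have Bk_max: "\<forall>B\<in>?F. inf_count x B \<le> inf_count x Bk" using Bk(2) fin by simp
  let ?C = "{B\<in>?F. inf_count x B = inf_count x Bk}"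
  obtain B where "B \<in> ?C" "\<forall>B'\<in>?C. basis_cost \<mu> x B \<le> basis_cost \<mu> x B'"
    using ex_minimizer[of ?C "basis_cost \<mu> x"] fin Bk(1) by auto
  then show ?thesis unfolding optimal_basis_def using Bk_max by auto
qed

lemma optimal_basis_if_as_good:
  assumes "optimal_basis E r \<mu> x B" "B' \<in> finite_bases E r \<mu>"
    and "inf_count x B' = inf_count x B" "basis_cost \<mu> x B' \<le> basis_cost \<mu> x B"
  shows "optimal_basis E r \<mu> x B'"
  using assms unfolding optimal_basis_def by force

lemma optimal_basis_same_values:
  assumes "optimal_basis E r \<mu> x B1" "optimal_basis E r \<mu> x B2"
  shows "inf_count x B1 = inf_count x B2" "basis_cost \<mu> x B1 = basis_cost \<mu> x B2"
  using assms unfolding optimal_basis_def by (meson order_antisym)+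

lemma inf_count_cong: "(\<And>e. e \<in> B \<Longrightarrow> x e = y e) \<Longrightarrow> inf_count x B = inf_count y B"
proof -
  assume "\<And>e. e \<in> B \<Longrightarrow> x e = y e"
  then have "{e\<in>B. x e = \<infinity>} = {e\<in>B. y e = \<infinity>}" by auto
  then show ?thesis unfolding inf_count_def by simp
qed

lemma basis_cost_cong: "(\<And>e. e \<in> B \<Longrightarrow> x e = y e) \<Longrightarrow> basis_cost \<mu> x B = basis_cost \<mu> y B"
proof -
  assume xy: "\<And>e. e \<in> B \<Longrightarrow> x e = y e"
  then have "{e\<in>B. x e \<noteq> \<infinity>} = {e\<in>B. y e \<noteq> \<infinity>}" by auto
  moreover have "(\<Sum>e\<in>{e\<in>B. y e \<noteq> \<infinity>}. real_of_ereal (x e)) = (\<Sum>e\<in>{e\<in>B. y e \<noteq> \<infinity>}. real_of_ereal (y e))"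
    using xy by (intro sum.cong) auto
  ultimately show ?thesis unfolding basis_cost_def by simp
qed

lemma inf_count_swap_finite:
  assumes "e \<in> B" "j \<notin> B" "x e \<noteq> \<infinity>" "x j \<noteq> \<infinity>"
  shows "inf_count x (insert j (B - {e})) = inf_count x B"
proof -
  have "{e'\<in>insert j (B - {e}). x e' = \<infinity>} = {e'\<in>B. x e' = \<infinity>}" using assms by auto
  then show ?thesis unfolding inf_count_def by simp
qed

lemma inf_count_swap_infinite:
  assumes "finite B" "e \<in> B" "j \<notin> B" "x e \<noteq> \<infinity>" "x j = \<infinity>"
  shows "inf_count x (insert j (B - {e})) = inf_count x B + 1"
proof -
  have "{e'\<in>insert j (B - {e}). x e' = \<infinity>} = insert j {e'\<in>B. x e' = \<infinity>}" using assms by auto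
  then show ?thesis unfolding inf_count_def using assms by simp
qed

lemma basis_cost_swap:
  assumes "finite B" "e \<in> B" "j \<notin> B" "x e \<noteq> \<infinity>" "x j \<noteq> \<infinity>"
  shows "basis_cost \<mu> x (insert j (B - {e})) = basis_cost \<mu> x B
           + real_of_ereal (\<mu> (insert j (B - {e}))) - real_of_ereal (\<mu> B)
           + real_of_ereal (x e) - real_of_ereal (x j)"
proof -
  let ?P = "{e'\<in>B. x e' \<noteq> \<infinity>}"
  have "{e'\<in>insert j (B - {e}). x e' \<noteq> \<infinity>} = insert j (?P - {e})" using assms by auto
  moreover have "(\<Sum>e'\<in>insert j (?P - {e}). real_of_ereal (x e'))
      = real_of_ereal (x j) + (\<Sum>e'\<in>?P. real_of_ereal (x e')) - real_of_ereal (x e)"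
    using assms by (simp add: sum_diff1)
  ultimately show ?thesis unfolding basis_cost_def by simp
qed

lemma inf_count_upd:
  assumes "finite B" "d \<in> B" "u d = \<infinity>"
  shows "inf_count u B = inf_count (u(d := ereal t)) B + 1"
proof -
  have "{e\<in>B. u e = \<infinity>} = insert d {e\<in>B. (u(d := ereal t)) e = \<infinity>}"
    "d \<notin> {e\<in>B. (u(d := ereal t)) e = \<infinity>}"
    using assms by auto
  then show ?thesis unfolding inf_count_def using assms(1) by simp
qed

lemma basis_cost_upd:
  assumes "finite B" "d \<in> B" "u d = \<infinity>"
  shows "basis_cost \<mu> (u(d := ereal t)) B = basis_cost \<mu> u B - t"
proof -
  let ?P = "{e\<in>B. u e \<noteq> \<infinity>}"
  have P: "{e\<in>B. (u(d := ereal t)) e \<noteq> \<infinity>} = insert d ?P" "d \<notin> ?P" using assms by auto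
  have "(\<Sum>e\<in>?P. real_of_ereal ((u(d := ereal t)) e)) = (\<Sum>e\<in>?P. real_of_ereal (u e))"
    using P(2) by (intro sum.cong) auto
  then show ?thesis unfolding basis_cost_def P(1) using P(2) assms(1) by simp
qed

lemma optimal_basis_circuit_le:
  assumes vm: "valuated_matroid E r \<mu>" and x_fin: "\<forall>e. x e \<noteq> -\<infinity>"
    and B: "optimal_basis E r \<mu> x B" and e0: "e0 \<in> B" "x e0 \<noteq> \<infinity>"
    and I: "I \<subseteq> E" "card I = Suc r" "e0 \<in> I" "\<mu> (I - {e0}) \<noteq> \<infinity>"
  shows "\<exists>j\<in>I. j \<noteq> e0 \<and> \<mu> (I - {j}) + x j \<le> \<mu> (I - {e0}) + x e0"
proof -
  let ?B' = "I - {e0}"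
  have "finite I" using I(1) valuated_matroid_finite[OF vm] by (rule finite_subset)
  then have B'F: "?B' \<in> finite_bases E r \<mu>" using I unfolding finite_bases_def by auto
  have BF: "B \<in> finite_bases E r \<mu>" using B unfolding optimal_basis_def by simp
  have finB: "finite B" using finite_bases_finite_member[OF vm BF] .
  obtain j where j: "j \<in> ?B' - B" and B1F: "insert j (B - {e0}) \<in> finite_bases E r \<mu>"
    and B2F: "insert e0 (?B' - {j}) \<in> finite_bases E r \<mu>"
    and ex: "real_of_ereal (\<mu> (insert j (B - {e0}))) + real_of_ereal (\<mu> (insert e0 (?B' - {j})))
      \<le> real_of_ereal (\<mu> B) + real_of_ereal (\<mu> ?B')"
    using exchange_finite_bases[OF vm BF B'F] e0(1) by blast
  have I_j: "insert e0 (?B' - {j}) = I - {j}" using j I(3) by auto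
  have x_j: "x j \<noteq> \<infinity>"
  proof
    assume "x j = \<infinity>"
    then have "inf_count x (insert j (B - {e0})) = inf_count x B + 1"
      using inf_count_swap_infinite[of B e0 j x] finB e0 j by blast
    then show False using B B1F unfolding optimal_basis_def by fastforce
  qed
  have "basis_cost \<mu> x B \<le> basis_cost \<mu> x (insert j (B - {e0}))"
    using B B1F inf_count_swap_finite[of e0 B j x] e0 x_j j unfolding optimal_basis_def by auto
  then have "real_of_ereal (\<mu> (I - {j})) + real_of_ereal (x j)
      \<le> real_of_ereal (\<mu> ?B') + real_of_ereal (x e0)"
    using basis_cost_swap[of B e0 j x \<mu>] finB e0 x_j j ex I_j by auto
  moreover have "\<bar>\<mu> (I - {j})\<bar> \<noteq> \<infinity>" "\<bar>\<mu> ?B'\<bar> \<noteq> \<infinity>"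
    using finite_bases_real[OF vm] B2F B'F I_j by auto
  ultimately have "\<mu> (I - {j}) + x j \<le> \<mu> ?B' + x e0"
    using x_fin x_j e0(2) by (subst ereal_add_le_iff_real) auto
  then show ?thesis using j by auto
qed

lemma trop_if_optimal_bases_cover:
  assumes vm: "valuated_matroid E r \<mu>" and x_fin: "\<forall>e. x e \<noteq> -\<infinity>"
    and x_out: "\<forall>e. e \<notin> E \<longrightarrow> x e = \<infinity>"
    and cover: "\<forall>e\<in>E. x e \<noteq> \<infinity> \<longrightarrow> (\<exists>B. optimal_basis E r \<mu> x B \<and> e \<in> B)"
  shows "x \<in> trop E r \<mu>"
  unfolding trop_def
proof (intro CollectI conjI allI impI)
  fix I assume I: "I \<subseteq> E \<and> card I = Suc r \<and> (\<exists>e\<in>I. \<mu> (I - {e}) \<noteq> \<infinity>)"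
  define g where "g e = \<mu> (I - {e}) + x e" for e
  show "min_twice I (\<lambda>e. \<mu> (I - {e}) + x e)"
  proof (cases "\<forall>e\<in>I. g e = \<infinity>")
    case True
    then show ?thesis unfolding min_twice_def g_def by simp
  next
    case False
    then obtain e' where e': "e' \<in> I" "g e' \<noteq> \<infinity>" by blast
    have "finite I" using I card.infinite by force
    then obtain e0 where e0: "e0 \<in> I" and e0_min: "\<forall>e\<in>I. g e0 \<le> g e"
      using ex_minimizer[of I g] e'(1) by auto
    then have "g e0 \<noteq> \<infinity>" using e' by (metis ereal_infty_less_eq(1))
    then have "\<mu> (I - {e0}) \<noteq> \<infinity>" "x e0 \<noteq> \<infinity>" unfolding g_def by auto
    moreover obtain B where "optimal_basis E r \<mu> x B" "e0 \<in> B"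
      using cover e0(1) I \<open>x e0 \<noteq> \<infinity>\<close> by blast
    ultimately obtain j where "j \<in> I" "j \<noteq> e0" "g j \<le> g e0"
      using optimal_basis_circuit_le[OF vm x_fin] e0(1) I unfolding g_def by blast
    then show ?thesis using min_twiceI[OF e0(1) e0_min] unfolding g_def by blast
  qed
qed (use x_fin x_out in auto)

lemma optimal_basis_swap_in:
  assumes vm: "valuated_matroid E r \<mu>" and x: "x \<in> trop E r \<mu>"
    and B: "optimal_basis E r \<mu> x B" and e0: "e0 \<in> E" "e0 \<notin> B" "x e0 \<noteq> \<infinity>"
  shows "\<exists>e\<in>B. optimal_basis E r \<mu> x (insert e0 (B - {e}))"
proof -
  have BF: "B \<in> finite_bases E r \<mu>" using B unfolding optimal_basis_def by simp
  have finB: "finite B" using finite_bases_finite_member[OF vm BF] .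
  have \<mu>B: "\<bar>\<mu> B\<bar> \<noteq> \<infinity>" using finite_bases_real[OF vm BF] .
  have x_fin: "\<forall>e. x e \<noteq> -\<infinity>" using x unfolding trop_def by simp
  let ?I = "insert e0 B"
  define g where "g e = \<mu> (?I - {e}) + x e" for e
  have I_e0: "?I - {e0} = B" using e0(2) by auto
  have "?I \<subseteq> E" "card ?I = Suc r" using BF e0 finB unfolding finite_bases_def by auto
  then have "min_twice ?I g"
    using trop_min_twice[OF x, of ?I e0] I_e0 \<mu>B unfolding g_def by auto
  moreover have "g e0 \<noteq> \<infinity>" unfolding g_def I_e0 using \<mu>B e0(3) by auto
  ultimately obtain e where e: "e \<in> B" "g e \<le> g e0" using min_twice_other_le by fastforce
  let ?B2 = "insert e0 (B - {e})"
  have I_e: "?I - {e} = ?B2" using e(1) e0(2) by auto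
  have "g e \<noteq> \<infinity>" using e(2) \<open>g e0 \<noteq> \<infinity>\<close> by (metis ereal_infty_less_eq(1))
  then have \<mu>B2: "\<mu> ?B2 \<noteq> \<infinity>" and x_e: "x e \<noteq> \<infinity>" unfolding g_def I_e by auto
  have B2F: "?B2 \<in> finite_bases E r \<mu>"
    using BF e e0 \<mu>B2 card_swap[OF finB e(1) e0(2)] unfolding finite_bases_def by auto
  have "real_of_ereal (\<mu> ?B2) + real_of_ereal (x e) \<le> real_of_ereal (\<mu> B) + real_of_ereal (x e0)"
    using e(2) finite_bases_real[OF vm B2F] \<mu>B x_fin x_e e0(3)
    unfolding g_def I_e I_e0 by (subst (asm) ereal_add_le_iff_real) auto
  then have "basis_cost \<mu> x ?B2 \<le> basis_cost \<mu> x B"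
    using basis_cost_swap[OF finB e(1) e0(2) x_e e0(3), of \<mu>] by linarith
  moreover have "inf_count x ?B2 = inf_count x B"
    using inf_count_swap_finite[OF e(1) e0(2) x_e e0(3)] .
  ultimately show ?thesis using optimal_basis_if_as_good[OF B B2F] e(1) by blast
qed

lemma optimal_bases_cover_if_trop:
  assumes vm: "valuated_matroid E r \<mu>" and x: "x \<in> trop E r \<mu>" and e0: "e0 \<in> E" "x e0 \<noteq> \<infinity>"
  shows "\<exists>B. optimal_basis E r \<mu> x B \<and> e0 \<in> B"
proof -
  obtain B where B: "optimal_basis E r \<mu> x B"
    using optimal_basis_exists[OF valuated_matroid_finite[OF vm] valuated_matroid_finite_bases_nonempty[OF vm]]
    by blast
  show ?thesis
  proof (cases "e0 \<in> B")
    case False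
    then show ?thesis using optimal_basis_swap_in[OF vm x B e0(1) False e0(2)] by blast
  qed (use B in blast)
qed

section \<open>Extending tropical vectors from a spanning subset\<close>

lemma inf_count_through_new_element_le:
  assumes vm: "valuated_matroid (insert d E') r \<mu>" and d: "d \<notin> E'"
    and Bo: "optimal_basis E' r \<mu> u Bo"
    and B: "B \<in> finite_bases (insert d E') r \<mu>" "d \<in> B"
  shows "inf_count u B \<le> inf_count u Bo + 1"
proof -
  have BoF: "Bo \<in> finite_bases (insert d E') r \<mu>"
    using Bo finite_bases_mono[of E' "insert d E'"] unfolding optimal_basis_def by blast
  have d_Bo: "d \<notin> Bo" using Bo d unfolding optimal_basis_def finite_bases_def by auto
  obtain j where j: "j \<in> Bo - B" and B3F: "insert j (B - {d}) \<in> finite_bases (insert d E') r \<mu>"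
    using exchange_finite_bases[OF vm B(1) BoF] B(2) d_Bo by blast
  let ?B3 = "insert j (B - {d})"
  have "?B3 \<in> finite_bases E' r \<mu>" using B3F j d_Bo unfolding finite_bases_def by auto
  then have "inf_count u ?B3 \<le> inf_count u Bo" using Bo unfolding optimal_basis_def by blast
  moreover have "inf_count u B \<le> inf_count u ?B3 + 1"
  proof -
    have fin: "finite {e\<in>?B3. u e = \<infinity>}" using finite_bases_finite_member[OF vm B(1)] by simp
    have "card {e\<in>B. u e = \<infinity>} \<le> card (insert d {e\<in>?B3. u e = \<infinity>})"
      using fin by (intro card_mono) auto
    also have "\<dots> \<le> card {e\<in>?B3. u e = \<infinity>} + 1" using fin by (simp add: card_insert_if)
    finally show ?thesis unfolding inf_count_def .
  qed
  ultimately show ?thesis by simp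
qed

lemma optimal_basis_after_update:
  assumes vm: "valuated_matroid (insert d E') r \<mu>" and d: "d \<notin> E'" and u_d: "u d = \<infinity>"
    and Bo: "optimal_basis E' r \<mu> u Bo"
    and Bd_min: "\<forall>B\<in>finite_bases (insert d E') r \<mu>. d \<in> B \<and> inf_count u B = inf_count u Bo + 1
                   \<longrightarrow> basis_cost \<mu> u Bd \<le> basis_cost \<mu> u B"
    and x: "x = u(d := ereal (basis_cost \<mu> u Bd - basis_cost \<mu> u Bo))"
    and B: "B \<in> finite_bases (insert d E') r \<mu>" "inf_count x B = inf_count u Bo"
      "basis_cost \<mu> x B \<le> basis_cost \<mu> u Bo"
  shows "optimal_basis (insert d E') r \<mu> x B"
proof -
  have "inf_count x B' \<le> inf_count u Bo \<and>
      (inf_count x B' = inf_count u Bo \<longrightarrow> basis_cost \<mu> u Bo \<le> basis_cost \<mu> x B')"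
    if B': "B' \<in> finite_bases (insert d E') r \<mu>" for B'
  proof (cases "d \<in> B'")
    case True
    have "finite B'" using finite_bases_finite_member[OF vm B'] .
    then have count: "inf_count u B' = inf_count x B' + 1"
      and cost: "basis_cost \<mu> x B' = basis_cost \<mu> u B' - (basis_cost \<mu> u Bd - basis_cost \<mu> u Bo)"
      using inf_count_upd[of B' d u] basis_cost_upd[of B' d u \<mu>] True u_d unfolding x by auto
    have "inf_count x B' \<le> inf_count u Bo"
      using inf_count_through_new_element_le[OF vm d Bo B' True] count by simp
    moreover have "basis_cost \<mu> u Bo \<le> basis_cost \<mu> x B'" if "inf_count x B' = inf_count u Bo"
      using Bd_min B' True count that cost by auto
    ultimately show ?thesis by blast
  next
    case False
    then have "B' \<in> finite_bases E' r \<mu>" using B' unfolding finite_bases_def by auto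
    moreover have "inf_count x B' = inf_count u B'" "basis_cost \<mu> x B' = basis_cost \<mu> u B'"
      using False unfolding x by (auto intro!: inf_count_cong basis_cost_cong)
    ultimately show ?thesis using Bo unfolding optimal_basis_def by auto
  qed
  then show ?thesis using B unfolding optimal_basis_def by force
qed

text \<open>The value given to the new coordinate d makes the cheapest basis through d that attains
  the maximal number of infinite coordinates tie with the optimal bases avoiding d.\<close>

lemma trop_extension_finite:
  assumes vm: "valuated_matroid (insert d E') r \<mu>" and d: "d \<notin> E'" and u: "u \<in> trop E' r \<mu>"
    and Bo: "optimal_basis E' r \<mu> u Bo"
    and Bd: "Bd \<in> finite_bases (insert d E') r \<mu>" "d \<in> Bd" "inf_count u Bd = inf_count u Bo + 1"
    and Bd_min: "\<forall>B\<in>finite_bases (insert d E') r \<mu>. d \<in> B \<and> inf_count u B = inf_count u Bo + 1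
                   \<longrightarrow> basis_cost \<mu> u Bd \<le> basis_cost \<mu> u B"
  shows "u(d := ereal (basis_cost \<mu> u Bd - basis_cost \<mu> u Bo)) \<in> trop (insert d E') r \<mu>"
    (is "?x \<in> trop ?E r \<mu>")
proof (rule trop_if_optimal_bases_cover[OF vm])
  have u_d: "u d = \<infinity>" using u d unfolding trop_def by simp
  have vm': "valuated_matroid E' r \<mu>"
    using valuated_matroid_subset[OF vm] Bo unfolding optimal_basis_def by blast
  note optimal = optimal_basis_after_update[OF vm d u_d Bo Bd_min refl]
  show "\<forall>e\<in>?E. ?x e \<noteq> \<infinity> \<longrightarrow> (\<exists>B. optimal_basis ?E r \<mu> ?x B \<and> e \<in> B)"
  proof (intro ballI impI)
    fix e assume e: "e \<in> ?E" "?x e \<noteq> \<infinity>"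
    show "\<exists>B. optimal_basis ?E r \<mu> ?x B \<and> e \<in> B"
    proof (cases "e = d")
      case True
      have "optimal_basis ?E r \<mu> ?x Bd"
        using optimal[OF Bd(1)] inf_count_upd[of Bd d u] basis_cost_upd[of Bd d u \<mu>] Bd u_d
          finite_bases_finite_member[OF vm Bd(1)] by force
      then show ?thesis using True Bd(2) by blast
    next
      case False
      then obtain B where B: "optimal_basis E' r \<mu> u B" "e \<in> B"
        using optimal_bases_cover_if_trop[OF vm' u] e by auto
      have "d \<notin> B" "B \<in> finite_bases ?E r \<mu>"
        using B(1) d unfolding optimal_basis_def finite_bases_def by auto
      moreover have "inf_count ?x B = inf_count u B" "basis_cost \<mu> ?x B = basis_cost \<mu> u B"
        using \<open>d \<notin> B\<close> by (auto intro!: inf_count_cong basis_cost_cong)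
      ultimately have "optimal_basis ?E r \<mu> ?x B"
        using optimal optimal_basis_same_values[OF B(1) Bo] by simp
      then show ?thesis using B(2) by blast
    qed
  qed
qed (use u d in \<open>auto simp: trop_def\<close>)

lemma optimal_basis_through_by_exchange:
  assumes vm: "valuated_matroid E r \<mu>"
    and B1: "optimal_basis E r \<mu> x B1" and B': "B' \<in> finite_bases E r \<mu>"
    and e0: "e0 \<in> B' - B1" "x e0 \<noteq> \<infinity>"
    and B'_best: "\<forall>j\<in>B1 - B'. insert j (B' - {e0}) \<in> finite_bases E r \<mu> \<longrightarrow>
       x j \<noteq> \<infinity> \<and> basis_cost \<mu> x B' \<le> basis_cost \<mu> x (insert j (B' - {e0}))"
  shows "\<exists>B. optimal_basis E r \<mu> x B \<and> e0 \<in> B"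
proof -
  have B1F: "B1 \<in> finite_bases E r \<mu>" using B1 unfolding optimal_basis_def by simp
  obtain j where j: "j \<in> B1 - B'" and B3F: "insert j (B' - {e0}) \<in> finite_bases E r \<mu>"
    and B4F: "insert e0 (B1 - {j}) \<in> finite_bases E r \<mu>"
    and ex: "real_of_ereal (\<mu> (insert j (B' - {e0}))) + real_of_ereal (\<mu> (insert e0 (B1 - {j})))
      \<le> real_of_ereal (\<mu> B') + real_of_ereal (\<mu> B1)"
    using exchange_finite_bases[OF vm B' B1F e0(1)] by blast
  have x_j: "x j \<noteq> \<infinity>" and le: "basis_cost \<mu> x B' \<le> basis_cost \<mu> x (insert j (B' - {e0}))"
    using B'_best j B3F by auto
  have "basis_cost \<mu> x (insert e0 (B1 - {j})) \<le> basis_cost \<mu> x B1"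
    using le ex j e0 x_j finite_bases_finite_member[OF vm] B' B1F
      basis_cost_swap[of B' e0 j x \<mu>] basis_cost_swap[of B1 j e0 x \<mu>] by auto
  moreover have "inf_count x (insert e0 (B1 - {j})) = inf_count x B1"
    using inf_count_swap_finite[of j B1 e0 x] j e0 x_j by auto
  ultimately have "optimal_basis E r \<mu> x (insert e0 (B1 - {j}))"
    using optimal_basis_if_as_good[OF B1 B4F] by simp
  then show ?thesis by blast
qed

lemma optimal_bases_cover_from_restriction:
  assumes vm: "valuated_matroid E r \<mu>" and E': "E' \<subseteq> E" and u_out: "\<forall>e. e \<notin> E' \<longrightarrow> u e = \<infinity>"
    and B': "optimal_basis E' r \<mu> u B'" "e0 \<in> B'" "u e0 \<noteq> \<infinity>"
    and count: "\<forall>B\<in>finite_bases E r \<mu>. inf_count u B \<le> inf_count u B'"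
  shows "\<exists>B. optimal_basis E r \<mu> u B \<and> e0 \<in> B"
proof -
  have B'F': "B' \<in> finite_bases E' r \<mu>" using B'(1) unfolding optimal_basis_def by simp
  then have B'F: "B' \<in> finite_bases E r \<mu>" using finite_bases_mono[OF E'] by blast
  obtain B1 where B1: "optimal_basis E r \<mu> u B1"
    using optimal_basis_exists[OF valuated_matroid_finite[OF vm] valuated_matroid_finite_bases_nonempty[OF vm]]
    by blast
  show ?thesis
  proof (cases "e0 \<in> B1")
    case True
    then show ?thesis using B1 by blast
  next
    case False
    show ?thesis
    proof (rule optimal_basis_through_by_exchange[OF vm B1 B'F])
      show "\<forall>j\<in>B1 - B'. insert j (B' - {e0}) \<in> finite_bases E r \<mu> \<longrightarrow>
          u j \<noteq> \<infinity> \<and> basis_cost \<mu> u B' \<le> basis_cost \<mu> u (insert j (B' - {e0}))"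
      proof (intro ballI impI)
        fix j assume j: "j \<in> B1 - B'" and B3F: "insert j (B' - {e0}) \<in> finite_bases E r \<mu>"
        have u_j: "u j \<noteq> \<infinity>"
        proof
          assume "u j = \<infinity>"
          then have "inf_count u (insert j (B' - {e0})) = inf_count u B' + 1"
            using inf_count_swap_infinite[of B' e0 j u] finite_bases_finite_member[OF vm B'F] B'(2,3) j
            by blast
          then show False using count B3F by fastforce
        qed
        then have "insert j (B' - {e0}) \<in> finite_bases E' r \<mu>"
          using B3F B'F' u_out unfolding finite_bases_def by auto
        then show "u j \<noteq> \<infinity> \<and> basis_cost \<mu> u B' \<le> basis_cost \<mu> u (insert j (B' - {e0}))"
          using B'(1) inf_count_swap_finite[of e0 B' j u] B'(2,3) j u_j
          unfolding optimal_basis_def by auto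
      qed
    qed (use B'(2,3) False in auto)
  qed
qed

lemma trop_from_restriction:
  assumes vm: "valuated_matroid E r \<mu>" and E': "E' \<subseteq> E" and u: "u \<in> trop E' r \<mu>"
    and Bo: "optimal_basis E' r \<mu> u Bo"
    and count: "\<forall>B\<in>finite_bases E r \<mu>. inf_count u B \<le> inf_count u Bo"
  shows "u \<in> trop E r \<mu>"
proof (rule trop_if_optimal_bases_cover[OF vm])
  have Bo_F: "Bo \<in> finite_bases E' r \<mu>" using Bo unfolding optimal_basis_def by simp
  then have vm': "valuated_matroid E' r \<mu>" using valuated_matroid_subset[OF vm E'] by blast
  have u_out: "\<forall>e. e \<notin> E' \<longrightarrow> u e = \<infinity>" using u unfolding trop_def by simp
  show "\<forall>e\<in>E. u e \<noteq> \<infinity> \<longrightarrow> (\<exists>B. optimal_basis E r \<mu> u B \<and> e \<in> B)"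
  proof (intro ballI impI)
    fix e assume e: "e \<in> E" "u e \<noteq> \<infinity>"
    then obtain B' where B': "optimal_basis E' r \<mu> u B'" "e \<in> B'"
      using optimal_bases_cover_if_trop[OF vm' u] u_out by blast
    then show "\<exists>B. optimal_basis E r \<mu> u B \<and> e \<in> B"
      using optimal_bases_cover_from_restriction[OF vm E' u_out B' e(2)] count
        optimal_basis_same_values(1)[OF B'(1) Bo] by simp
  qed
qed (use u E' in \<open>auto simp: trop_def\<close>)

lemma trop_extend_one:
  assumes vm: "valuated_matroid (insert d E') r \<mu>" and d: "d \<notin> E'"
    and E'_bases: "finite_bases E' r \<mu> \<noteq> {}" and u: "u \<in> trop E' r \<mu>"
  shows "\<exists>x\<in>trop (insert d E') r \<mu>. \<forall>e\<in>E'. x e = u e"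
proof -
  let ?E = "insert d E'"
  have "finite E'" using valuated_matroid_finite[OF vm] by simp
  then obtain Bo where Bo: "optimal_basis E' r \<mu> u Bo" using optimal_basis_exists E'_bases by blast
  let ?C = "{B\<in>finite_bases ?E r \<mu>. d \<in> B \<and> inf_count u B = inf_count u Bo + 1}"
  show ?thesis
  proof (cases "?C = {}")
    case True
    have "inf_count u B \<le> inf_count u Bo" if B: "B \<in> finite_bases ?E r \<mu>" for B
    proof (cases "d \<in> B")
      case True
      then show ?thesis using inf_count_through_new_element_le[OF vm d Bo B] B \<open>?C = {}\<close> by fastforce
    next
      case False
      then have "B \<in> finite_bases E' r \<mu>" using B unfolding finite_bases_def by auto
      then show ?thesis using Bo unfolding optimal_basis_def by blast
    qed
    then show ?thesis using trop_from_restriction[OF vm _ u Bo] by blast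
  next
    case False
    have "finite ?C" using finite_bases_finite[OF valuated_matroid_finite[OF vm]] by simp
    then obtain Bd where Bd: "Bd \<in> ?C" "\<forall>B\<in>?C. basis_cost \<mu> u Bd \<le> basis_cost \<mu> u B"
      using ex_minimizer[of ?C "basis_cost \<mu> u"] False by blast
    let ?x = "u(d := ereal (basis_cost \<mu> u Bd - basis_cost \<mu> u Bo))"
    have "?x \<in> trop ?E r \<mu>" using Bd by (intro trop_extension_finite[OF vm d u Bo]) auto
    moreover have "\<forall>e\<in>E'. ?x e = u e" using d by auto
    ultimately show ?thesis by blast
  qed
qed

lemma trop_extend:
  assumes vm: "valuated_matroid E r \<mu>" and E': "E' \<subseteq> E" "finite_bases E' r \<mu> \<noteq> {}"
    and u: "u \<in> trop E' r \<mu>"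
  shows "\<exists>v\<in>trop E r \<mu>. \<forall>e\<in>E'. v e = u e"
proof -
  have "\<exists>v\<in>trop E r \<mu>. \<forall>e\<in>E - D. v e = u e"
    if "finite D" "D \<subseteq> E" "finite_bases (E - D) r \<mu> \<noteq> {}" "u \<in> trop (E - D) r \<mu>" for D u
    using that
  proof (induction D arbitrary: u rule: finite_induct)
    case (insert d D)
    have E_d: "insert d (E - insert d D) = E - D" using insert.hyps(2) insert.prems(1) by auto
    have "finite_bases (E - D) r \<mu> \<noteq> {}"
      using insert.prems(2) finite_bases_mono[of "E - insert d D" "E - D"] by blast
    moreover have "valuated_matroid (E - D) r \<mu>"
      using valuated_matroid_subset[OF vm _ calculation] by blast
    ultimately obtain u' where u': "u' \<in> trop (E - D) r \<mu>" "\<forall>e\<in>E - insert d D. u' e = u e"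
      using trop_extend_one[of d "E - insert d D" r \<mu> u] insert.prems E_d by auto
    then obtain v where "v \<in> trop E r \<mu>" "\<forall>e\<in>E - D. v e = u' e"
      using insert.IH insert.prems(1) \<open>finite_bases (E - D) r \<mu> \<noteq> {}\<close> by blast
    moreover have "E - insert d D \<subseteq> E - D" by blast
    ultimately show ?case using u'(2) by (metis subsetD)
  qed auto
  moreover have "finite (E - E')" using valuated_matroid_finite[OF vm] by simp
  moreover have "E - (E - E') = E'" using E'(1) by auto
  ultimately show ?thesis using E' u by (metis Diff_subset)
qed

lemma trop_restrict:
  assumes vm: "valuated_matroid E r \<mu>" and E': "E' \<subseteq> E" "finite_bases E' r \<mu> \<noteq> {}"
  shows "inf_outside E' ` trop E r \<mu> = trop E' r \<mu>"
proof
  show "inf_outside E' ` trop E r \<mu> \<subseteq> trop E' r \<mu>"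
  proof
    fix y assume "y \<in> inf_outside E' ` trop E r \<mu>"
    then obtain x where x: "x \<in> trop E r \<mu>" and y: "y = inf_outside E' x" by blast
    have "min_twice I (\<lambda>e. \<mu> (I - {e}) + y e)"
      if I: "I \<subseteq> E'" "card I = Suc r" "e \<in> I" "\<mu> (I - {e}) \<noteq> \<infinity>" for I e
    proof (subst min_twice_cong[where h = "\<lambda>e. \<mu> (I - {e}) + x e"])
      show "min_twice I (\<lambda>e. \<mu> (I - {e}) + x e)" using trop_min_twice[OF x] I E'(1) by blast
    qed (use I(1) in \<open>auto simp: y inf_outside_def\<close>)
    then show "y \<in> trop E' r \<mu>" using x unfolding trop_def y inf_outside_def by auto
  qed
  show "trop E' r \<mu> \<subseteq> inf_outside E' ` trop E r \<mu>"
  proof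
    fix u assume u: "u \<in> trop E' r \<mu>"
    obtain v where v: "v \<in> trop E r \<mu>" "\<forall>e\<in>E'. v e = u e" using trop_extend[OF vm E' u] by blast
    have "u = inf_outside E' v" using u v(2) unfolding trop_def inf_outside_def by auto
    then show "u \<in> inf_outside E' ` trop E r \<mu>" using v(1) by blast
  qed
qed

section \<open>Diagonal pullbacks\<close>

lemma trop_pointed_weighted:
  assumes vm: "valuated_matroid {1..n} r \<mu>" and w_fin: "\<forall>i\<in>{1..n}. w i \<noteq> -\<infinity>"
    and B0: "B0 \<in> finite_bases {1..n} r \<mu>" "\<forall>i\<in>B0. w i \<noteq> \<infinity>"
  shows "proj_n n ` trop {0..n} r (\<lambda>B. pointed \<mu> B + sum w B)
    = (\<lambda>v. inf_outside {1..n} (\<lambda>i. w i + v i)) ` trop {1..n} r \<mu>"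
proof -
  define \<nu> where "\<nu> = (\<lambda>B. pointed \<mu> B + sum w B)"
  define L where "L = {i\<in>{1..n}. w i = \<infinity>}"
  define E' where "E' = {1..n} - L"
  have w_E': "\<forall>i\<in>E'. \<bar>w i\<bar> \<noteq> \<infinity>" using w_fin unfolding E'_def L_def by auto
  have B0_E': "B0 \<in> finite_bases E' r \<mu>" using B0 unfolding finite_bases_def E'_def L_def by auto
  have \<nu>_E': "\<nu> B = \<mu> B + sum w B" if "B \<subseteq> E'" for B
    using that unfolding \<nu>_def pointed_def E'_def by auto
  have \<nu>_B0: "\<nu> B0 \<noteq> \<infinity>"
    using \<nu>_E'[of B0] B0_E' B0(2) sum_Pinfty[of w B0] unfolding finite_bases_def by auto
  have loops: "\<nu> B = \<infinity>" if B: "B \<subseteq> {0..n}" "B \<inter> insert 0 L \<noteq> {}" for B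
  proof (cases "0 \<in> B")
    case False
    then obtain l where "l \<in> B" "w l = \<infinity>" using B(2) unfolding L_def by auto
    moreover have "finite B" using B(1) finite_subset by blast
    ultimately show ?thesis unfolding \<nu>_def using sum_Pinfty[of w B] by auto
  qed (simp add: \<nu>_def pointed_def)
  have E'_eq: "{0..n} - insert 0 L = E'" unfolding E'_def L_def by auto
  have "trop {0..n} r \<nu> = trop ({0..n} - insert 0 L) r \<nu>"
    by (rule trop_remove_loops[OF _ _ loops]) (use B0_E' \<nu>_B0 E'_eq in \<open>auto simp: finite_bases_def L_def\<close>)
  also have "\<dots> = trop E' r \<nu>" unfolding E'_eq ..
  also have "\<dots> = trop E' r (\<lambda>B. \<mu> B + sum w B)" using \<nu>_E' by (rule trop_cong)
  also have "\<dots> = (\<lambda>v. inf_outside E' (\<lambda>i. w i + v i)) ` trop E' r \<mu>"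
    using w_E' by (rule trop_add_weights)
  also have "\<dots> = (\<lambda>v. inf_outside E' (\<lambda>i. w i + v i)) ` inf_outside E' ` trop {1..n} r \<mu>"
    using trop_restrict[OF vm _, of E'] B0_E' unfolding E'_def by auto
  also have "\<dots> = (\<lambda>v. inf_outside {1..n} (\<lambda>i. w i + v i)) ` trop {1..n} r \<mu>"
    unfolding image_image by (intro image_cong refl ext) (auto simp: inf_outside_def E'_def L_def)
  finally have trop_eq: "trop {0..n} r \<nu> = \<dots>" .
  have "proj_n n x = x" if "x \<in> trop {0..n} r \<nu>" for x
    using that unfolding trop_eq proj_n_def inf_outside_def by auto
  then have "proj_n n ` trop {0..n} r \<nu> = trop {0..n} r \<nu>" by simp
  then show ?thesis using trop_eq unfolding \<nu>_def by simp
qed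

lemma pullback_identity:
  assumes "\<forall>i\<in>{0..n}. fst (f i) = i" "B \<subseteq> {0..n}"
  shows "pullback n \<mu> f B = pointed \<mu> B + (\<Sum>i\<in>B. snd (f i))"
proof -
  have "(fst \<circ> f) ` B = B" "inj_on (fst \<circ> f) B"
    using assms by (force simp: image_iff, auto simp: inj_on_def subset_iff)
  then show ?thesis unfolding pullback_def using assms(2) by simp
qed

lemma trop_act_diagonal:
  assumes "val 0 = \<infinity>" "\<forall>i\<in>{1..n}. \<forall>j\<in>{1..n}. j \<noteq> i \<longrightarrow> A i j = 0"
  shows "trop_act n val A v = inf_outside {1..n} (\<lambda>i. val (A i i) + v i)"
proof -
  have "(INF j\<in>{1..n}. val (A i j) + v j) = val (A i i) + v i" if "i \<in> {1..n}" for i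
  proof (rule antisym)
    show "(INF j\<in>{1..n}. val (A i j) + v j) \<le> val (A i i) + v i" using that by (rule INF_lower)
    show "val (A i i) + v i \<le> (INF j\<in>{1..n}. val (A i j) + v j)"
    proof (rule INF_greatest)
      fix j assume "j \<in> {1..n}"
      then show "val (A i i) + v i \<le> val (A i j) + v j" using assms that by (cases "j = i") auto
    qed
  qed
  then show ?thesis unfolding trop_act_def inf_outside_def by auto
qed

lemma trop_pullback_diagonal:
  assumes val0: "val 0 = \<infinity>" and vm: "valuated_matroid {1..n} r \<mu>"
    and f_id: "\<forall>i\<in>{0..n}. fst (f i) = i" and f_fin: "\<forall>i\<in>{0..n}. snd (f i) \<noteq> -\<infinity>"
    and diag: "\<forall>i\<in>{1..n}. val (A i i) = snd (f i)"
    and off_diag: "\<forall>i\<in>{1..n}. \<forall>j\<in>{1..n}. j \<noteq> i \<longrightarrow> A i j = 0"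
    and B0: "B0 \<in> finite_bases {1..n} r \<mu>" "\<forall>i\<in>B0. snd (f i) \<noteq> \<infinity>"
  shows "proj_n n ` trop {0..n} r (pullback n \<mu> f) = trop_act n val A ` trop {1..n} r \<mu>"
proof -
  have "trop {0..n} r (pullback n \<mu> f) = trop {0..n} r (\<lambda>B. pointed \<mu> B + (\<Sum>i\<in>B. snd (f i)))"
    using pullback_identity[OF f_id] by (rule trop_cong)
  moreover have "trop_act n val A v = inf_outside {1..n} (\<lambda>i. snd (f i) + v i)" for v
    using trop_act_diagonal[of val n A v, OF val0 off_diag] diag unfolding inf_outside_def by auto
  ultimately show ?thesis using trop_pointed_weighted[OF vm _ B0] f_fin by simp
qed

lemma pullback_finite_basis:
  assumes "valuated_matroid {0..n} r (pullback n \<mu> f)" "\<forall>i\<in>{0..n}. fst (f i) = i"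
  shows "\<exists>B\<in>finite_bases {1..n} r \<mu>. \<forall>i\<in>B. snd (f i) \<noteq> \<infinity>"
proof -
  obtain B where B: "B \<subseteq> {0..n}" "card B = r" "pullback n \<mu> f B \<noteq> \<infinity>"
    using assms(1) unfolding valuated_matroid_def by blast
  then have "pointed \<mu> B + (\<Sum>i\<in>B. snd (f i)) \<noteq> \<infinity>" using pullback_identity[OF assms(2)] by simp
  then have "0 \<notin> B" "\<mu> B \<noteq> \<infinity>" "\<forall>i\<in>B. snd (f i) \<noteq> \<infinity>"
    using sum_Pinfty[of "\<lambda>i. snd (f i)" B] finite_subset[OF B(1)] unfolding pointed_def
    by (auto split: if_splits)
  moreover have "B \<subseteq> {1..n}"
  proof
    fix i assume "i \<in> B"
    moreover have "i \<le> n" using B(1) \<open>i \<in> B\<close> by auto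
    ultimately show "i \<in> {1..n}" using \<open>0 \<notin> B\<close> by (cases i) auto
  qed
  ultimately show ?thesis using B(2) unfolding finite_bases_def by blast
qed

lemma associated_map_full_rank_diagonal:
  assumes "full_rank_diagonal n A"
  shows "associated_map n val A i = (if i \<in> {1..n} then (i, val (A i i)) else (0, \<infinity>))"
proof (cases "i \<in> {1..n}")
  case True
  have off_diag: "\<forall>i\<in>{1..n}. \<forall>j\<in>{1..n}. i \<noteq> j \<longrightarrow> A i j = 0" and "A i i \<noteq> 0"
    using assms True unfolding full_rank_diagonal_def by auto
  have "(THE j. j \<in> {1..n} \<and> A i j \<noteq> 0) = i"
  proof (rule the_equality)
    show "i \<in> {1..n} \<and> A i i \<noteq> 0" using True \<open>A i i \<noteq> 0\<close> by simp
    show "j = i" if "j \<in> {1..n} \<and> A i j \<noteq> 0" for j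
      using that off_diag[rule_format, OF True, of j] by auto
  qed
  moreover have "\<exists>j\<in>{1..n}. A i j \<noteq> 0" using True \<open>A i i \<noteq> 0\<close> by blast
  ultimately show ?thesis using True unfolding associated_map_def by simp
qed (auto simp: associated_map_def)

theorem lemma2p23:
  fixes val :: "'k::field \<Rightarrow> ereal" and \<mu> :: "nat set \<Rightarrow> ereal" and n r :: nat
  assumes "nonarch_valuation val"
    and "valuated_matroid {1..n} r \<mu>"
  shows "(\<forall>(f :: nat \<Rightarrow> nat \<times> ereal) (A :: nat \<Rightarrow> nat \<Rightarrow> 'k).
            (\<forall>i\<in>{0..n}. fst (f i) = i) \<and> (\<forall>i\<in>{0..n}. snd (f i) \<noteq> -\<infinity>) \<and>
            (\<forall>i\<in>{1..n}. \<exists>k. snd (f i) = val k) \<and>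
            associated_matrix n val f A \<and>
            valuated_matroid {0..n} r (pullback n \<mu> f) \<longrightarrow>
            proj_n n ` trop {0..n} r (pullback n \<mu> f) = trop_act n val A ` trop {1..n} r \<mu>)
       \<and> (\<forall>A :: nat \<Rightarrow> nat \<Rightarrow> 'k. full_rank_diagonal n A \<longrightarrow>
            proj_n n ` trop {0..n} r (pullback n \<mu> (associated_map n val A))
              = trop_act n val A ` trop {1..n} r \<mu>)"
proof -
  have val0: "val 0 = \<infinity>" and val_fin: "\<And>x. x \<noteq> 0 \<Longrightarrow> \<exists>c. val x = ereal c"
    using assms(1) unfolding nonarch_valuation_def by auto
  show ?thesis
  proof (intro conjI allI impI)
    fix f :: "nat \<Rightarrow> nat \<times> ereal" and A :: "nat \<Rightarrow> nat \<Rightarrow> 'k"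
    assume H: "(\<forall>i\<in>{0..n}. fst (f i) = i) \<and> (\<forall>i\<in>{0..n}. snd (f i) \<noteq> -\<infinity>) \<and>
      (\<forall>i\<in>{1..n}. \<exists>k. snd (f i) = val k) \<and> associated_matrix n val f A \<and>
      valuated_matroid {0..n} r (pullback n \<mu> f)"
    then have f_id: "\<forall>i\<in>{0..n}. fst (f i) = i" by blast
    \<comment> \<open>The hypothesis that each f_2(i) is a valuation is implied by associated_matrix.\<close>
    obtain B0 where "B0 \<in> finite_bases {1..n} r \<mu>" "\<forall>i\<in>B0. snd (f i) \<noteq> \<infinity>"
      using pullback_finite_basis[OF _ f_id] H by blast
    then show "proj_n n ` trop {0..n} r (pullback n \<mu> f) = trop_act n val A ` trop {1..n} r \<mu>"
      using H by (intro trop_pullback_diagonal[where val = val, OF val0 assms(2) f_id])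
        (auto simp: associated_matrix_def)
  next
    fix A :: "nat \<Rightarrow> nat \<Rightarrow> 'k"
    assume A: "full_rank_diagonal n A"
    have diag_fin: "val (A i i) \<noteq> \<infinity> \<and> val (A i i) \<noteq> -\<infinity>" if "i \<in> {1..n}" for i
      using A val_fin[of "A i i"] that unfolding full_rank_diagonal_def by auto
    obtain B0 where B0: "B0 \<in> finite_bases {1..n} r \<mu>"
      using valuated_matroid_finite_bases_nonempty[OF assms(2)] by blast
    show "proj_n n ` trop {0..n} r (pullback n \<mu> (associated_map n val A))
        = trop_act n val A ` trop {1..n} r \<mu>"
      by (rule trop_pullback_diagonal[where val = val, OF val0 assms(2) _ _ _ _ B0])
        (use A diag_fin B0 in \<open>auto simp: associated_map_full_rank_diagonal full_rank_diagonal_def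
           finite_bases_def\<close>)
  qed
qed

end
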